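(* Consider the system of ordinary differential equations for $(T,I,V,A)$: \[ \frac{dT}{dt}=\Lambda-\mu T-\beta_0 VT,\qquad \frac{dI}{dt}=\beta_0 VT-\delta I,\qquad \frac{dV}{dt}=\omega I-cV-bAV,\qquad \frac{dA}{dt}=aVA-\sigma A, \] where all parameters $\Lambda,\mu,\beta_0,\delta,\omega,c,b,a,\sigma$ are strictly positive. Let $R_0=\frac{\beta_0\omega\Lambda}{c\delta\mu}$, $V^{is}=(R_0-1)\frac{\mu}{\beta_0}$ and $V^t=\frac{\sigma}{a}$. Assume that $\delta>\mu$ and that $(R_0-1)\frac{\mu}{\beta_0}>\frac{\sigma}{a}$ (i.e. $V^{is}>V^t$). Then this system has exactly one stable equilibrium, namely \[ T=\frac{\Lambda}{\mu+\beta_0V^t},\quad I=\frac{\beta_0\Lambda V^t}{\delta(\mu+\beta_0V^t)},\quad V=V^t,\quad A=\frac{c\,\beta_0\,(V^{is}-V^t)}{b(\mu+\beta_0V^t)}. \]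
   Context: An equilibrium is a point where all four right-hand sides vanish. "Stable" means (linearly, locally asymptotically) stable: all eigenvalues of the Jacobian matrix of the vector field at the equilibrium have strictly negative real parts. The other equilibria of the system are the trivial equilibrium $T=\Lambda/\mu$, $I=V=A=0$ and the "immunosuppression" equilibrium with $A=0$; these are not stable under the stated assumptions. *)

theory Defs
  imports "HOL-Analysis.Analysis" "Jordan_Normal_Form.Char_Poly"
begin

definition rhs :: "real \<Rightarrow> real \<Rightarrow> real \<Rightarrow> real \<Rightarrow> real \<Rightarrow> real \<Rightarrow> real \<Rightarrow> real \<Rightarrow> real
   \<Rightarrow> real \<times> real \<times> real \<times> real \<Rightarrow> real \<times> real \<times> real \<times> real" where
  "rhs \<Lambda> \<mu> \<beta>0 \<delta> \<omega> c b a \<sigma> = (\<lambda>(T, I, V, A).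
     (\<Lambda> - \<mu> * T - \<beta>0 * V * T,
      \<beta>0 * V * T - \<delta> * I,
      \<omega> * I - c * V - b * A * V,
      a * V * A - \<sigma> * A))"

definition is_equilibrium where
  "is_equilibrium \<Lambda> \<mu> \<beta>0 \<delta> \<omega> c b a \<sigma> p \<longleftrightarrow> rhs \<Lambda> \<mu> \<beta>0 \<delta> \<omega> c b a \<sigma> p = (0, 0, 0, 0)"

definition jacobian :: "real \<Rightarrow> real \<Rightarrow> real \<Rightarrow> real \<Rightarrow> real \<Rightarrow> real \<Rightarrow> real \<Rightarrow> real \<Rightarrow> real
   \<Rightarrow> real \<times> real \<times> real \<times> real \<Rightarrow> complex mat" where
  "jacobian \<Lambda> \<mu> \<beta>0 \<delta> \<omega> c b a \<sigma> = (\<lambda>(T, I, V, A).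
     map_mat complex_of_real (mat_of_rows_list 4
      [[- \<mu> - \<beta>0 * V, 0, - \<beta>0 * T, 0],
       [\<beta>0 * V, - \<delta>, \<beta>0 * T, 0],
       [0, \<omega>, - c - b * A, - b * V],
       [0, 0, a * A, a * V - \<sigma>]]))"

definition is_stable where
  "is_stable \<Lambda> \<mu> \<beta>0 \<delta> \<omega> c b a \<sigma> p \<longleftrightarrow>
     (\<forall>z. eigenvalue (jacobian \<Lambda> \<mu> \<beta>0 \<delta> \<omega> c b a \<sigma> p) z \<longrightarrow> Re z < 0)"

end

theory Submission
  imports Defs
begin

text \<open>
  At an equilibrium \<open>A = 0\<close> or \<open>V = \<sigma>/a\<close>. If \<open>A = 0\<close>, the point is either virus free, where
  \<open>R\<^sub>0 > 1\<close> gives the \<open>(I, V)\<close> block of the Jacobian a positive eigenvalue, or it has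
  \<open>V = V\<^sup>i\<^sup>s\<close>; there the last row of the Jacobian vanishes off the diagonal, so
  \<open>a V\<^sup>i\<^sup>s - \<sigma> > 0\<close> is an eigenvalue. If \<open>V = \<sigma>/a\<close>, the equilibrium is unique, and eliminating
  an eigenvector shows that every eigenvalue \<open>z\<close> satisfies
  \<open>\<delta> r z (z + \<mu>) = (z + \<mu> + \<beta>\<^sub>0 V) (z + \<delta>) (z (z + r) + k)\<close> with \<open>r = c + b A\<close> and
  \<open>k = a b A V\<close>. For \<open>Re z \<ge> 0\<close> the right-hand side has the larger modulus, because
  \<open>|z + \<mu>| < |z + \<mu> + \<beta>\<^sub>0 V|\<close>, \<open>\<delta> \<le> |z + \<delta>|\<close> and \<open>r |z| \<le> |z (z + r) + k|\<close>.
\<close>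

lemma eigenvalue_iff_nontrivial_solution:
  fixes A :: "'a::field mat"
  assumes A: "A \<in> carrier_mat n n"
  shows "eigenvalue A k \<longleftrightarrow>
    (\<exists>x. (\<exists>i<n. x i \<noteq> 0) \<and> (\<forall>i<n. (\<Sum>j<n. A $$ (i, j) * x j) = k * x i))"
    (is "_ \<longleftrightarrow> ?solvable")
proof
  assume "eigenvalue A k"
  then obtain v where v: "v \<in> carrier_vec n" "v \<noteq> 0\<^sub>v n" "A *\<^sub>v v = k \<cdot>\<^sub>v v"
    using A unfolding eigenvalue_def eigenvector_def by auto
  have "\<exists>i<n. v $ i \<noteq> 0"
    using v(1,2) by (metis carrier_vecD eq_vecI index_zero_vec(1,2))
  moreover have "(\<Sum>j<n. A $$ (i, j) * v $ j) = k * v $ i" if "i < n" for i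
    using arg_cong[OF v(3), of "\<lambda>w. vec_index w i"] that A v(1)
    by (simp add: scalar_prod_def lessThan_atLeast0)
  ultimately show ?solvable
    by blast
next
  assume ?solvable
  then obtain x where x: "\<exists>i<n. x i \<noteq> 0" "\<And>i. i < n \<Longrightarrow> (\<Sum>j<n. A $$ (i, j) * x j) = k * x i"
    by blast
  have "vec n x \<noteq> 0\<^sub>v n"
    using x(1) by (metis index_vec index_zero_vec(1))
  moreover have "A *\<^sub>v vec n x = k \<cdot>\<^sub>v vec n x"
    using A x(2) by (auto simp: scalar_prod_def lessThan_atLeast0)
  ultimately have "eigenvector A (vec n x) k"
    unfolding eigenvector_def using A by simp
  then show "eigenvalue A k"
    unfolding eigenvalue_def by blast
qed

lemma ex_nat_fun_4_iff: "(\<exists>x :: nat \<Rightarrow> 'a. P (x 0) (x 1) (x 2) (x 3)) \<longleftrightarrow> (\<exists>x1 x2 x3 x4. P x1 x2 x3 x4)"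
proof
  assume "\<exists>x1 x2 x3 x4. P x1 x2 x3 x4"
  then obtain x1 x2 x3 x4 where "P x1 x2 x3 x4"
    by blast
  then show "\<exists>x :: nat \<Rightarrow> 'a. P (x 0) (x 1) (x 2) (x 3)"
    by (intro exI[of _ "\<lambda>i. [x1, x2, x3, x4] ! i"]) simp
qed blast

lemma jacobian_carrier: "jacobian \<Lambda> \<mu> \<beta>0 \<delta> \<omega> c b a \<sigma> p \<in> carrier_mat 4 4"
  by (cases p) (auto simp: jacobian_def mat_of_rows_list_def)

lemma eigenvalue_jacobian_iff:
  "eigenvalue (jacobian \<Lambda> \<mu> \<beta>0 \<delta> \<omega> c b a \<sigma> (T, I, V, A)) z \<longleftrightarrow>
   (\<exists>x1 x2 x3 x4 :: complex. (x1, x2, x3, x4) \<noteq> (0, 0, 0, 0) \<and>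
     - of_real (\<mu> + \<beta>0 * V) * x1 - of_real (\<beta>0 * T) * x3 = z * x1 \<and>
     of_real (\<beta>0 * V) * x1 - of_real \<delta> * x2 + of_real (\<beta>0 * T) * x3 = z * x2 \<and>
     of_real \<omega> * x2 - of_real (c + b * A) * x3 - of_real (b * V) * x4 = z * x3 \<and>
     of_real (a * A) * x3 + of_real (a * V - \<sigma>) * x4 = z * x4)"
  unfolding eigenvalue_iff_nontrivial_solution[OF jacobian_carrier] ex_nat_fun_4_iff[symmetric]
  by (simp add: numeral_eq_Suc All_less_Suc Ex_less_Suc jacobian_def mat_of_rows_list_def algebra_simps; blast)

lemma eigenvalue_diagonal_entry_of_zero_row:
  fixes J :: "'a::field mat"
  assumes J: "J \<in> carrier_mat n n" and i: "i < n"
    and row_zero: "\<And>j. j < n \<Longrightarrow> j \<noteq> i \<Longrightarrow> J $$ (i, j) = 0"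
  shows "eigenvalue J (J $$ (i, i))"
proof -
  have "eigenvector (transpose_mat J) (unit_vec n i) (J $$ (i, i))"
    unfolding eigenvector_def using J i row_zero
    by (auto simp: scalar_prod_right_unit)
  then have "eigenvalue (transpose_mat J) (J $$ (i, i))"
    unfolding eigenvalue_def by blast
  then show ?thesis
    using J by (simp add: eigenvalue_root_char_poly char_poly_transpose_mat)
qed

lemma exists_pos_root_of_shifted_product:
  fixes d c K :: real
  assumes "0 \<le> d" "0 \<le> c" "d * c < K"
  shows "\<exists>l>0. (l + d) * (l + c) = K"
proof -
  have K: "0 \<le> K"
    using assms mult_nonneg_nonneg[OF assms(1,2)] by linarith
  have "K < (K + 1 + d) * (K + 1 + c)"
  proof -
    have "K < (K + 1) * (K + 1)"
      using K by (simp add: algebra_simps add_pos_nonneg)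
    also have "\<dots> \<le> (K + 1 + d) * (K + 1 + c)"
      using assms K by (intro mult_mono) auto
    finally show ?thesis .
  qed
  then have "\<exists>l\<ge>0. l \<le> K + 1 \<and> (l + d) * (l + c) = K"
    using assms K by (intro IVT') (auto intro!: continuous_intros)
  then obtain l where "0 \<le> l" "(l + d) * (l + c) = K"
    by blast
  moreover have "l \<noteq> 0"
    using calculation assms(3) by auto
  ultimately show ?thesis
    by (intro exI[of _ l]) simp
qed

lemma jacobian_virus_free_positive_eigenvalue:
  assumes "0 < \<mu>" "0 < \<delta>" "0 < c" "0 < \<omega>" and "\<delta> * c < \<beta>0 * \<omega> * T"
  shows "\<exists>z. eigenvalue (jacobian \<Lambda> \<mu> \<beta>0 \<delta> \<omega> c b a \<sigma> (T, I, 0, 0)) z \<and> 0 < Re z"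
proof -
  obtain l where l: "0 < l" "(l + \<delta>) * (l + c) = \<beta>0 * \<omega> * T"
    using exists_pos_root_of_shifted_product[of \<delta> c "\<beta>0 * \<omega> * T"] assms by auto
  define x1 where "x1 = - \<beta>0 * T / (l + \<mu>)"
  define x2 where "x2 = (l + c) / \<omega>"
  have "- \<mu> * x1 - \<beta>0 * T = l * x1"
    using l assms by (simp add: x1_def field_simps)
  moreover have "- \<delta> * x2 + \<beta>0 * T = l * x2"
    using l assms by (simp add: x2_def field_simps)
  moreover have "\<omega> * x2 - c = l"
    using assms by (simp add: x2_def field_simps)
  ultimately have "eigenvalue (jacobian \<Lambda> \<mu> \<beta>0 \<delta> \<omega> c b a \<sigma> (T, I, 0, 0)) (of_real l)"
    unfolding eigenvalue_jacobian_iff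
    by (intro exI[of _ "of_real x1"] exI[of _ "of_real x2"] exI[of _ 1] exI[of _ 0])
       (simp flip: of_real_mult of_real_diff of_real_add of_real_minus)
  with l show ?thesis
    by auto
qed

lemma cmod_add_real_less:
  fixes z :: complex
  assumes "0 \<le> Re z" "0 \<le> u" "u < v"
  shows "cmod (z + of_real u) < cmod (z + of_real v)"
proof -
  have "(Re z + u)\<^sup>2 + (Im z)\<^sup>2 < (Re z + v)\<^sup>2 + (Im z)\<^sup>2"
    using assms by (simp add: power_strict_mono)
  then show ?thesis
    unfolding cmod_def by simp
qed

lemma real_le_cmod_add_real:
  fixes z :: complex
  assumes "0 \<le> Re z"
  shows "u \<le> cmod (z + of_real u)"
  using assms complex_Re_le_cmod[of "z + of_real u"] by simp

lemma mult_cmod_le_cmod_quadratic: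
  fixes z :: complex
  assumes "0 \<le> Re z" "0 \<le> k"
  shows "r * cmod z \<le> cmod (z * (z + of_real r) + of_real k)"
proof (cases "z = 0")
  case False
  have "0 \<le> Re (of_real k / z)"
    using assms by (simp add: Re_divide)
  then have "r \<le> cmod (z + of_real r + of_real k / z)"
    using assms complex_Re_le_cmod[of "z + of_real r + of_real k / z"] by simp
  then have "r * cmod z \<le> cmod (z + of_real r + of_real k / z) * cmod z"
    by (rule mult_right_mono) simp
  also have "\<dots> = cmod ((z + of_real r + of_real k / z) * z)"
    by (simp only: norm_mult)
  also have "(z + of_real r + of_real k / z) * z = z * (z + of_real r) + of_real k"
    using False by (simp add: field_simps)
  finally show ?thesis .
qed (use assms in simp)

lemma no_root_with_nonneg_Re:
  fixes z :: complex
  assumes z: "0 \<le> Re z" and "0 \<le> m" "m < P" "0 < d" "0 < r" "0 < k"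
  shows "of_real (d * r) * z * (z + of_real m)
    \<noteq> (z + of_real P) * (z + of_real d) * (z * (z + of_real r) + of_real k)"
proof (cases "z = 0")
  case True
  with assms show ?thesis
    by simp
next
  case False
  have "d * cmod (z + of_real m) < d * cmod (z + of_real P)"
    using cmod_add_real_less[OF z, of m P] assms by simp
  also have "\<dots> \<le> cmod (z + of_real d) * cmod (z + of_real P)"
    using real_le_cmod_add_real[OF z, of d] by (rule mult_right_mono) simp
  finally have "cmod (of_real (d * r) * z * (z + of_real m))
      < (cmod (z + of_real d) * cmod (z + of_real P)) * (r * cmod z)"
    using False assms by (simp add: norm_mult abs_of_pos mult_ac)
  also have "\<dots> \<le> (cmod (z + of_real d) * cmod (z + of_real P)) * cmod (z * (z + of_real r) + of_real k)"
    using mult_cmod_le_cmod_quadratic[OF z, of k r] assms by (intro mult_left_mono) auto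
  also have "\<dots> = cmod ((z + of_real P) * (z + of_real d) * (z * (z + of_real r) + of_real k))"
    by (simp add: norm_mult)
  finally show ?thesis
    by auto
qed

lemma jacobian_characteristic_equation:
  assumes "a * V = \<sigma>" "b * V \<noteq> 0"
    and ev: "eigenvalue (jacobian \<Lambda> \<mu> \<beta>0 \<delta> \<omega> c b a \<sigma> (T, I, V, A)) z"
    and "z + of_real (\<mu> + \<beta>0 * V) \<noteq> 0" "z + of_real \<delta> \<noteq> 0"
  shows "of_real (\<omega> * \<beta>0 * T) * z * (z + of_real \<mu>)
    = (z + of_real (\<mu> + \<beta>0 * V)) * (z + of_real \<delta>) * (z * (z + of_real (c + b * A)) + of_real (a * b * A * V))"
    (is "?lhs = ?rhs")
proof -
  obtain x1 x2 x3 x4 :: complex where x: "(x1, x2, x3, x4) \<noteq> (0, 0, 0, 0)"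
    and e1: "- of_real (\<mu> + \<beta>0 * V) * x1 - of_real (\<beta>0 * T) * x3 = z * x1"
    and e2: "of_real (\<beta>0 * V) * x1 - of_real \<delta> * x2 + of_real (\<beta>0 * T) * x3 = z * x2"
    and e3: "of_real \<omega> * x2 - of_real (c + b * A) * x3 - of_real (b * V) * x4 = z * x3"
    and e4: "of_real (a * A) * x3 + of_real (a * V - \<sigma>) * x4 = z * x4"
    using ev unfolding eigenvalue_jacobian_iff by blast
  have "x3 \<noteq> 0"
  proof
    assume "x3 = 0"
    then have "(z + of_real (\<mu> + \<beta>0 * V)) * x1 = 0"
      using e1 by (simp add: algebra_simps add_eq_0_iff2 eq_neg_iff_add_eq_0)
    then have "x1 = 0"
      using assms(4) by simp
    then have "(z + of_real \<delta>) * x2 = 0"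
      using e2 \<open>x3 = 0\<close> by (simp add: algebra_simps add_eq_0_iff2 eq_neg_iff_add_eq_0)
    then have "x2 = 0"
      using assms(5) by simp
    then have "x4 = 0"
      using e3 \<open>x3 = 0\<close> assms(2) by simp
    with x \<open>x1 = 0\<close> \<open>x2 = 0\<close> \<open>x3 = 0\<close> show False
      by simp
  qed
  moreover have "(?lhs - ?rhs) * x3 = 0"
  proof -
    have "- of_real (\<mu> + \<beta>0 * V) * x1 - of_real (\<beta>0 * T) * x3 - z * x1 = 0" (is "?r1 = 0")
      and "of_real (\<beta>0 * V) * x1 - of_real \<delta> * x2 + of_real (\<beta>0 * T) * x3 - z * x2 = 0"
        (is "?r2 = 0")
      and "of_real \<omega> * x2 - of_real (c + b * A) * x3 - of_real (b * V) * x4 - z * x3 = 0"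
        (is "?r3 = 0")
      and "of_real (a * A) * x3 + of_real (a * V - \<sigma>) * x4 - z * x4 = 0" (is "?r4 = 0")
      using e1 e2 e3 e4 by simp_all
    moreover
    have "(?lhs - ?rhs) * x3 =
        of_real (\<omega> * \<beta>0 * V) * z * ?r1 + of_real \<omega> * z * (z + of_real (\<mu> + \<beta>0 * V)) * ?r2
      + (z + of_real (\<mu> + \<beta>0 * V)) * (z + of_real \<delta>) * (z * ?r3 - of_real (b * V) * ?r4)"
      using assms(1) by (simp add: algebra_simps)
    ultimately show ?thesis
      by simp
  qed
  ultimately show ?thesis
    by simp
qed

lemma jacobian_eigenvalue_Re_neg:
  assumes "0 < \<mu>" "0 < \<beta>0" "0 < \<delta>" "0 < c" "0 < b" "0 < a" "0 < V" "0 < A"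
    and "a * V = \<sigma>" "\<omega> * \<beta>0 * T = \<delta> * (c + b * A)"
    and ev: "eigenvalue (jacobian \<Lambda> \<mu> \<beta>0 \<delta> \<omega> c b a \<sigma> (T, I, V, A)) z"
  shows "Re z < 0"
proof (rule ccontr)
  assume "\<not> Re z < 0"
  then have z: "0 \<le> Re z"
    by simp
  have "0 < \<mu> + \<beta>0 * V"
    using assms by (simp add: add_pos_pos)
  with z assms(3) have "z + of_real (\<mu> + \<beta>0 * V) \<noteq> 0" "z + of_real \<delta> \<noteq> 0"
    by (auto simp: complex_eq_iff)
  then have "of_real (\<omega> * \<beta>0 * T) * z * (z + of_real \<mu>)
    = (z + of_real (\<mu> + \<beta>0 * V)) * (z + of_real \<delta>) * (z * (z + of_real (c + b * A)) + of_real (a * b * A * V))"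
    using jacobian_characteristic_equation[OF assms(9) _ ev] assms(5,7) by simp
  moreover have "of_real (\<delta> * (c + b * A)) * z * (z + of_real \<mu>)
    \<noteq> (z + of_real (\<mu> + \<beta>0 * V)) * (z + of_real \<delta>) * (z * (z + of_real (c + b * A)) + of_real (a * b * A * V))"
    using assms by (intro no_root_with_nonneg_Re[OF z]) (simp_all add: add_pos_pos)
  ultimately show False
    using assms(10) by simp
qed

lemma is_equilibrium_iff:
  "is_equilibrium \<Lambda> \<mu> \<beta>0 \<delta> \<omega> c b a \<sigma> (T, I, V, A) \<longleftrightarrow>
     \<Lambda> - \<mu> * T - \<beta>0 * V * T = 0 \<and> \<beta>0 * V * T - \<delta> * I = 0 \<and>
     \<omega> * I - c * V - b * A * V = 0 \<and> a * V * A - \<sigma> * A = 0"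
  by (simp add: is_equilibrium_def rhs_def)

locale virus_antibody_model =
  fixes \<Lambda> \<mu> \<beta>0 \<delta> \<omega> c b a \<sigma> :: real
  assumes pos: "0 < \<Lambda>" "0 < \<mu>" "0 < \<beta>0" "0 < \<delta>" "0 < \<omega>" "0 < c" "0 < b" "0 < a" "0 < \<sigma>"
begin

abbreviation equilibrium :: "real \<times> real \<times> real \<times> real \<Rightarrow> bool" where
  "equilibrium \<equiv> is_equilibrium \<Lambda> \<mu> \<beta>0 \<delta> \<omega> c b a \<sigma>"

abbreviation stable :: "real \<times> real \<times> real \<times> real \<Rightarrow> bool" where
  "stable \<equiv> is_stable \<Lambda> \<mu> \<beta>0 \<delta> \<omega> c b a \<sigma>"

definition R0 :: real where
  "R0 = \<beta>0 * \<omega> * \<Lambda> / (c * \<delta> * \<mu>)"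

definition Vis :: real where
  "Vis = (R0 - 1) * \<mu> / \<beta>0"

definition Vt :: real where
  "Vt = \<sigma> / a"

definition endemic_point :: "real \<times> real \<times> real \<times> real" where
  "endemic_point =
     (\<Lambda> / (\<mu> + \<beta>0 * Vt), \<beta>0 * \<Lambda> * Vt / (\<delta> * (\<mu> + \<beta>0 * Vt)), Vt,
      c * \<beta>0 * (Vis - Vt) / (b * (\<mu> + \<beta>0 * Vt)))"

lemma Vt_pos: "0 < Vt"
  using pos by (simp add: Vt_def)

lemma R0_gt_1:
  assumes "Vt < Vis"
  shows "1 < R0"
proof -
  have "0 < (R0 - 1) * \<mu> / \<beta>0"
    using assms Vt_pos by (simp add: Vis_def)
  then show ?thesis
    using pos by (simp add: zero_less_divide_iff zero_less_mult_iff)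
qed

lemma Lambda_eq: "\<Lambda> = c * \<delta> * (\<mu> + \<beta>0 * Vis) / (\<beta>0 * \<omega>)"
  using pos by (simp add: Vis_def R0_def field_simps)

lemma Lambda_eq_D:
  assumes "D = \<mu> + \<beta>0 * Vt"
  shows "\<Lambda> = c * \<delta> * (D + \<beta>0 * (Vis - Vt)) / (\<beta>0 * \<omega>)"
  using Lambda_eq assms by (simp add: algebra_simps)

lemma virus_free_equilibrium_unstable:
  assumes "1 < R0" and eq: "equilibrium (T, I, 0, A)"
  shows "\<not> stable (T, I, 0, A)"
proof -
  have "A = 0" "T = \<Lambda> / \<mu>"
    using eq pos by (auto simp: is_equilibrium_iff field_simps)
  moreover have "\<delta> * c < \<beta>0 * \<omega> * (\<Lambda> / \<mu>)"
    using assms(1) pos by (simp add: R0_def field_simps)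
  ultimately have "\<exists>z. eigenvalue (jacobian \<Lambda> \<mu> \<beta>0 \<delta> \<omega> c b a \<sigma> (T, I, 0, A)) z \<and> 0 < Re z"
    using jacobian_virus_free_positive_eigenvalue pos by simp
  then show ?thesis
    unfolding is_stable_def by force
qed

lemma immunosuppressed_equilibrium_unstable:
  assumes "Vt < Vis" "V \<noteq> 0" and eq: "equilibrium (T, I, V, 0)"
  shows "\<not> stable (T, I, V, 0)"
proof -
  have e1: "\<Lambda> - \<mu> * T - \<beta>0 * V * T = 0" and e2: "\<beta>0 * V * T = \<delta> * I" and e3: "\<omega> * I = c * V"
    using eq by (simp_all add: is_equilibrium_iff)
  have "\<omega> * \<beta>0 * V * T = \<delta> * c * V"
    using e2 e3 by (metis mult.assoc mult.left_commute)
  then have T: "T = c * \<delta> / (\<beta>0 * \<omega>)"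
    using assms(2) pos by (simp add: field_simps)
  have "c * \<delta> / \<omega> * (Vis - V) = 0"
    using e1 pos unfolding T by (subst (asm) Lambda_eq) (simp add: field_simps)
  then have "V = Vis"
    using pos by simp
  then have "0 < a * V - \<sigma>"
    using assms(1) pos by (simp add: Vt_def field_simps)
  moreover
  let ?J = "jacobian \<Lambda> \<mu> \<beta>0 \<delta> \<omega> c b a \<sigma> (T, I, V, 0)"
  have "eigenvalue ?J (?J $$ (3, 3))"
    by (rule eigenvalue_diagonal_entry_of_zero_row[OF jacobian_carrier])
       (auto simp: jacobian_def mat_of_rows_list_def less_Suc_eq numeral_eq_Suc)
  ultimately show ?thesis
    unfolding is_stable_def by (force simp: jacobian_def mat_of_rows_list_def)
qed

lemma equilibrium_at_Vt_iff: "equilibrium (T, I, Vt, A) \<longleftrightarrow> (T, I, Vt, A) = endemic_point"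
proof -
  define D where "D = \<mu> + \<beta>0 * Vt"
  have Vt: "0 < Vt" "a * Vt = \<sigma>" and D: "0 < D"
    using Vt_pos pos by (simp_all add: Vt_def D_def add_pos_pos)
  have "equilibrium (T, I, Vt, A) \<longleftrightarrow>
      T = \<Lambda> / D \<and> I = \<beta>0 * Vt * T / \<delta> \<and> A = (\<omega> * I - c * Vt) / (b * Vt)"
    using Vt D pos by (auto simp: is_equilibrium_iff D_def field_simps)
  txt \<open>\<open>\<Lambda>\<close> is abstracted to \<open>L\<close>: rewriting \<open>\<Lambda>\<close> in place would loop, as \<open>Vis\<close> depends on it.\<close>
  moreover have A_identity:
    "(\<omega> * (\<beta>0 * Vt * (L / D) / \<delta>) - c * Vt) / (b * Vt) = c * \<beta>0 * (Vis - Vt) / (b * D)"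
    if "L = c * \<delta> * (D + \<beta>0 * (Vis - Vt)) / (\<beta>0 * \<omega>)" for L
    using Vt D pos unfolding that by (simp add: field_simps)
  moreover have "endemic_point = (\<Lambda> / D, \<beta>0 * Vt * (\<Lambda> / D) / \<delta>, Vt, c * \<beta>0 * (Vis - Vt) / (b * D))"
    by (simp add: endemic_point_def D_def mult_ac)
  ultimately show ?thesis
    using A_identity[OF Lambda_eq_D[OF D_def]] by auto
qed

lemma endemic_point_stable:
  assumes "Vt < Vis"
  shows "stable endemic_point"
proof -
  define D where "D = \<mu> + \<beta>0 * Vt"
  define A where "A = c * \<beta>0 * (Vis - Vt) / (b * D)"
  have D: "0 < D"
    using Vt_pos pos by (simp add: D_def add_pos_pos)
  have "0 < A"
    using assms D pos by (simp add: A_def)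
  have balance: "\<omega> * \<beta>0 * (L / D) = \<delta> * (c + b * A)"
    if "L = c * \<delta> * (D + \<beta>0 * (Vis - Vt)) / (\<beta>0 * \<omega>)" for L
    using D pos unfolding that A_def by (simp add: field_simps)
  have "endemic_point = (\<Lambda> / D, \<beta>0 * \<Lambda> * Vt / (\<delta> * D), Vt, A)"
    by (simp add: endemic_point_def D_def A_def)
  then show ?thesis
    unfolding is_stable_def
    using jacobian_eigenvalue_Re_neg[OF pos(2,3,4,6,7,8) Vt_pos \<open>0 < A\<close> _
        balance[OF Lambda_eq_D[OF D_def]]] pos
    by (simp add: Vt_def)
qed

lemma stable_equilibria:
  assumes "Vt < Vis"
  shows "{p. equilibrium p \<and> stable p} = {endemic_point}"
proof (intro equalityI subsetI)
  fix p
  assume "p \<in> {p. equilibrium p \<and> stable p}"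
  then obtain T I V A where p: "p = (T, I, V, A)"
    and eq: "equilibrium (T, I, V, A)" and "stable (T, I, V, A)"
    by (cases p) auto
  then have "A \<noteq> 0"
    using virus_free_equilibrium_unstable[OF R0_gt_1[OF assms]]
      immunosuppressed_equilibrium_unstable[OF assms] by (cases "V = 0") auto
  then have "V = Vt"
    using eq pos by (auto simp: is_equilibrium_iff Vt_def field_simps)
  then show "p \<in> {endemic_point}"
    using eq equilibrium_at_Vt_iff p by auto
next
  fix p
  assume "p \<in> {endemic_point}"
  moreover have "equilibrium endemic_point"
    using equilibrium_at_Vt_iff by (simp add: endemic_point_def)
  ultimately show "p \<in> {p. equilibrium p \<and> stable p}"
    using endemic_point_stable[OF assms] by auto
qed

end

theorem proposition1:
  fixes \<Lambda> \<mu> \<beta>0 \<delta> \<omega> c b a \<sigma> :: real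
  assumes pos: "\<Lambda> > 0" "\<mu> > 0" "\<beta>0 > 0" "\<delta> > 0" "\<omega> > 0" "c > 0" "b > 0" "a > 0" "\<sigma> > 0"
    and "\<delta> > \<mu>"
    and "(\<beta>0 * \<omega> * \<Lambda> / (c * \<delta> * \<mu>) - 1) * \<mu> / \<beta>0 > \<sigma> / a"
  shows "{p. is_equilibrium \<Lambda> \<mu> \<beta>0 \<delta> \<omega> c b a \<sigma> p \<and> is_stable \<Lambda> \<mu> \<beta>0 \<delta> \<omega> c b a \<sigma> p}
    = (let R0 = \<beta>0 * \<omega> * \<Lambda> / (c * \<delta> * \<mu>);
           Vis = (R0 - 1) * \<mu> / \<beta>0;
           Vt = \<sigma> / a
       in {(\<Lambda> / (\<mu> + \<beta>0 * Vt),
            \<beta>0 * \<Lambda> * Vt / (\<delta> * (\<mu> + \<beta>0 * Vt)),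
            Vt,
            c * \<beta>0 * (Vis - Vt) / (b * (\<mu> + \<beta>0 * Vt)))})"
proof -
  interpret virus_antibody_model \<Lambda> \<mu> \<beta>0 \<delta> \<omega> c b a \<sigma>
    using pos by unfold_locales
  have "{p. equilibrium p \<and> stable p} = {endemic_point}"
    by (rule stable_equilibria) (use assms(11) in \<open>simp add: Vis_def Vt_def R0_def\<close>)
  then show ?thesis
    by (simp add: endemic_point_def Vis_def Vt_def R0_def Let_def)
qed

end
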